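(* Let $X,Y$ be real normed linear spaces, $Z=X\oplus_\infty Y$ and $z=(x,y)\in Z\setminus\{\theta\}$. Then: (i) If $\|x\|>\|y\|$ and $x$ is $\varepsilon_x$-smooth for some $\varepsilon_x\in[0,2)$, then $z$ is $\varepsilon_x$-smooth. (ii) If $\|x\|<\|y\|$ and $y$ is $\varepsilon_y$-smooth for some $\varepsilon_y\in[0,2)$, then $z$ is $\varepsilon_y$-smooth. (iii) If $\|x\|=\|y\|$, then $z$ is not $\varepsilon$-smooth for any $\varepsilon\in[0,2)$.
   Context: $X\oplus_\infty Y$ is $X\times Y$ with norm $\max\{\|x\|,\|y\|\}$. For a normed space $W$ and $w\neq\theta$, $J(w)=\{\phi\in S_{W^*}:\phi(w)=\|w\|\}$, and $w$ is $\delta$-smooth if $\sup_{\phi,\psi\in J(w)}\|\phi-\psi\|\le\delta$; "approximately smooth" means $\delta$-smooth for some $\delta\in[0,2)$. *)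

theory Defs
  imports "HOL-Analysis.Analysis"
begin

definition is_dual_functional :: "('v::real_vector \<Rightarrow> real) \<Rightarrow> ('v \<Rightarrow> real) \<Rightarrow> bool" where
  "is_dual_functional N f \<longleftrightarrow> linear f \<and> (\<exists>K. \<forall>v. \<bar>f v\<bar> \<le> K * N v)"

definition dual_norm :: "('v::real_vector \<Rightarrow> real) \<Rightarrow> ('v \<Rightarrow> real) \<Rightarrow> real" where
  "dual_norm N f = Sup {\<bar>f v\<bar> | v. N v \<le> 1}"

definition supp_functionals :: "('v::real_vector \<Rightarrow> real) \<Rightarrow> 'v \<Rightarrow> ('v \<Rightarrow> real) set" where
  "supp_functionals N w = {f. is_dual_functional N f \<and> dual_norm N f = 1 \<and> f w = N w}"

definition delta_smooth :: "('v::real_vector \<Rightarrow> real) \<Rightarrow> real \<Rightarrow> 'v \<Rightarrow> bool" where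
  "delta_smooth N \<delta> w \<longleftrightarrow> w \<noteq> 0 \<and>
     (\<forall>f\<in>supp_functionals N w. \<forall>g\<in>supp_functionals N w. dual_norm N (\<lambda>v. f v - g v) \<le> \<delta>)"

definition inf_sum_norm :: "('a::real_normed_vector \<times> 'b::real_normed_vector) \<Rightarrow> real" where
  "inf_sum_norm z = max (norm (fst z)) (norm (snd z))"

end

theory Submission
  imports Defs
begin

text \<open>If \<open>\<parallel>y\<parallel> < \<parallel>x\<parallel>\<close>, moving \<open>y\<close> a little in any direction does not change the max norm
  of \<open>(x, y)\<close>, so every support functional of \<open>(x, y)\<close> vanishes on \<open>0 \<times> Y\<close>: it is a support
  functional of \<open>x\<close> composed with the first projection, and the diameter of \<open>J(x, y)\<close> is bounded
  by that of \<open>J(x)\<close>. The case \<open>\<parallel>x\<parallel> < \<parallel>y\<parallel>\<close> follows by swapping coordinates.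
  If \<open>\<parallel>x\<parallel> = \<parallel>y\<parallel>\<close>, norming functionals \<open>\<phi>\<close> at \<open>x\<close> and \<open>\<psi>\<close> at \<open>y\<close> give the support
  functionals \<open>\<phi> \<circ> fst\<close> and \<open>\<psi> \<circ> snd\<close> of \<open>(x, y)\<close>, which take the values \<open>1\<close> and \<open>-1\<close> at
  \<open>(x / \<parallel>x\<parallel>, - y / \<parallel>y\<parallel>)\<close>; so \<open>J(x, y)\<close> has diameter 2. The norming functionals come from
  the Hahn-Banach theorem, proved here via a Zorn-minimal sublinear functional below the norm.\<close>

section \<open>Sublinear functionals and the Hahn-Banach theorem\<close>

definition sublinear :: "('v::real_vector \<Rightarrow> real) \<Rightarrow> bool" where
  "sublinear q \<longleftrightarrow> (\<forall>u v. q (u + v) \<le> q u + q v) \<and> (\<forall>c v. 0 < c \<longrightarrow> q (c *\<^sub>R v) = c * q v)"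

lemma sublinear_add: "sublinear q \<Longrightarrow> q (u + v) \<le> q u + q v"
  unfolding sublinear_def by blast

lemma sublinear_scaleR_pos: "sublinear q \<Longrightarrow> 0 < c \<Longrightarrow> q (c *\<^sub>R v) = c * q v"
  unfolding sublinear_def by blast

lemma sublinearI_scaleR_le:
  assumes "\<And>u v. q (u + v) \<le> q u + q v" and "\<And>c v. 0 < c \<Longrightarrow> q (c *\<^sub>R v) \<le> c * q v"
  shows "sublinear q"
  unfolding sublinear_def
proof (intro conjI allI impI assms(1))
  fix c :: real and v assume c: "0 < c"
  have "q v = q (inverse c *\<^sub>R c *\<^sub>R v)" using c by simp
  also have "\<dots> \<le> inverse c * q (c *\<^sub>R v)" using c by (intro assms(2)) simp
  finally have "c * q v \<le> q (c *\<^sub>R v)" using c by (simp add: field_simps)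
  with assms(2)[OF c, of v] show "q (c *\<^sub>R v) = c * q v" by simp
qed

lemma sublinear_zero: "sublinear q \<Longrightarrow> q 0 = 0"
  using sublinear_scaleR_pos[of q 2 0] by simp

lemma sublinear_scaleR_nonneg: "sublinear q \<Longrightarrow> 0 \<le> c \<Longrightarrow> q (c *\<^sub>R v) = c * q v"
  by (cases "c = 0") (auto simp: sublinear_zero sublinear_scaleR_pos)

lemma sublinear_minus_le: "sublinear q \<Longrightarrow> - q (- v) \<le> q v"
  using sublinear_add[of q v "- v"] sublinear_zero[of q] by simp

lemma sublinear_norm: "sublinear norm"
  unfolding sublinear_def by (auto simp: norm_triangle_ineq)

lemma linear_if_sublinear_odd:
  assumes q: "sublinear q" and odd: "\<And>v. q (- v) = - q v"
  shows "linear q"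
proof (rule linearI)
  fix u v
  have "q (- u + - v) \<le> q (- u) + q (- v)" by (rule sublinear_add[OF q])
  then have "q u + q v \<le> q (u + v)" using odd[of "u + v"] by (simp add: odd)
  with sublinear_add[OF q] show "q (u + v) = q u + q v" by (simp add: order_antisym)
next
  fix c :: real and v
  show "q (c *\<^sub>R v) = c *\<^sub>R q v"
  proof (cases "0 \<le> c")
    case True
    then show ?thesis using sublinear_scaleR_nonneg[OF q] by simp
  next
    case False
    then have "q (- (c *\<^sub>R v)) = - c * q v" using sublinear_scaleR_nonneg[OF q, of "- c" v] by simp
    then show ?thesis by (simp add: odd)
  qed
qed

text \<open>\<open>ray_inf q a\<close> is a sublinear functional below \<open>q\<close> that is already as small at \<open>- a\<close> as
  linearity demands; hence a minimal sublinear functional is odd, and thus linear.\<close>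

definition ray_inf :: "('v::real_vector \<Rightarrow> real) \<Rightarrow> 'v \<Rightarrow> 'v \<Rightarrow> real" where
  "ray_inf q a v = (INF t\<in>{0..}. q (v + t *\<^sub>R a) - t * q a)"

lemma ray_inf_le_shift:
  assumes q: "sublinear q" and "0 \<le> t"
  shows "ray_inf q a v \<le> q (v + t *\<^sub>R a) - t * q a"
  unfolding ray_inf_def
proof (rule cINF_lower)
  show "bdd_below ((\<lambda>t. q (v + t *\<^sub>R a) - t * q a) ` {0..})"
  proof (rule bdd_belowI2)
    fix s :: real assume "s \<in> {0..}"
    then have "q (s *\<^sub>R a) = s * q a" by (simp add: sublinear_scaleR_nonneg[OF q])
    moreover have "q (s *\<^sub>R a) \<le> q (v + s *\<^sub>R a) + q (- v)"
      using sublinear_add[OF q, of "v + s *\<^sub>R a" "- v"] by simp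
    ultimately show "- q (- v) \<le> q (v + s *\<^sub>R a) - s * q a" by simp
  qed
qed (use assms in simp)

lemma ray_inf_greatest:
  "(\<And>t. 0 \<le> t \<Longrightarrow> c \<le> q (v + t *\<^sub>R a) - t * q a) \<Longrightarrow> c \<le> ray_inf q a v"
  unfolding ray_inf_def by (rule cINF_greatest) auto

lemma ray_inf_le: "sublinear q \<Longrightarrow> ray_inf q a \<le> q"
  using ray_inf_le_shift[of q 0 a] by (simp add: le_fun_def)

lemma ray_inf_minus: "sublinear q \<Longrightarrow> ray_inf q a (- a) \<le> - q a"
  using ray_inf_le_shift[of q 1 a "- a"] sublinear_zero[of q] by simp

lemma sublinear_ray_inf:
  assumes q: "sublinear q"
  shows "sublinear (ray_inf q a)"
proof (rule sublinearI_scaleR_le)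
  fix u v
  have "ray_inf q a (u + v) - ray_inf q a v \<le> q (u + s *\<^sub>R a) - s * q a" if "0 \<le> s" for s
  proof -
    have "ray_inf q a (u + v) - (q (u + s *\<^sub>R a) - s * q a) \<le> ray_inf q a v"
    proof (rule ray_inf_greatest)
      fix t :: real assume "0 \<le> t"
      have "ray_inf q a (u + v) \<le> q ((u + s *\<^sub>R a) + (v + t *\<^sub>R a)) - (s + t) * q a"
        using ray_inf_le_shift[OF q, of "s + t" a "u + v"] \<open>0 \<le> s\<close> \<open>0 \<le> t\<close>
        by (simp add: algebra_simps)
      also have "\<dots> \<le> q (u + s *\<^sub>R a) + q (v + t *\<^sub>R a) - (s + t) * q a"
        using sublinear_add[OF q] by simp
      finally show "ray_inf q a (u + v) - (q (u + s *\<^sub>R a) - s * q a) \<le> q (v + t *\<^sub>R a) - t * q a"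
        by (simp add: algebra_simps)
    qed
    then show ?thesis by simp
  qed
  then have "ray_inf q a (u + v) - ray_inf q a v \<le> ray_inf q a u"
    by (rule ray_inf_greatest)
  then show "ray_inf q a (u + v) \<le> ray_inf q a u + ray_inf q a v" by simp
next
  fix c :: real and v assume c: "0 < c"
  have "ray_inf q a (c *\<^sub>R v) / c \<le> ray_inf q a v"
  proof (rule ray_inf_greatest)
    fix t :: real assume "0 \<le> t"
    have "ray_inf q a (c *\<^sub>R v) \<le> q (c *\<^sub>R v + (c * t) *\<^sub>R a) - (c * t) * q a"
      using ray_inf_le_shift[OF q, of "c * t" a "c *\<^sub>R v"] c \<open>0 \<le> t\<close> by simp
    also have "\<dots> = c * (q (v + t *\<^sub>R a) - t * q a)"
      using sublinear_scaleR_pos[OF q c, of "v + t *\<^sub>R a"] by (simp add: algebra_simps)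
    finally show "ray_inf q a (c *\<^sub>R v) / c \<le> q (v + t *\<^sub>R a) - t * q a"
      using c by (simp add: divide_le_eq mult.commute)
  qed
  then show "ray_inf q a (c *\<^sub>R v) \<le> c * ray_inf q a v"
    using c by (simp add: divide_le_eq mult.commute)
qed

locale dominated_sublinear_chain =
  fixes p :: "'v::real_vector \<Rightarrow> real" and C :: "('v \<Rightarrow> real) set"
  assumes nonempty: "C \<noteq> {}"
    and sublinear_mem: "\<And>q. q \<in> C \<Longrightarrow> sublinear q"
    and dominated: "\<And>q. q \<in> C \<Longrightarrow> q \<le> p"
    and chain: "\<And>q r. q \<in> C \<Longrightarrow> r \<in> C \<Longrightarrow> q \<le> r \<or> r \<le> q"
begin

lemma INF_le: "q \<in> C \<Longrightarrow> (INF r\<in>C. r v) \<le> q v"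
proof (rule cINF_lower[OF bdd_belowI2])
  fix r assume "r \<in> C"
  then show "- p (- v) \<le> r v"
    using sublinear_minus_le[OF sublinear_mem] dominated by (meson le_funD neg_le_iff_le order_trans)
qed

lemma le_INF: "(\<And>q. q \<in> C \<Longrightarrow> c \<le> q v) \<Longrightarrow> c \<le> (INF q\<in>C. q v)"
  by (rule cINF_greatest) (use nonempty in auto)

lemma sublinear_INF: "sublinear (\<lambda>v. INF q\<in>C. q v)"
proof (rule sublinearI_scaleR_le)
  fix u v
  have "(INF s\<in>C. s (u + v)) - q u \<le> r v" if q: "q \<in> C" and r: "r \<in> C" for q r
  proof -
    obtain s where s: "s \<in> C" "s \<le> q" "s \<le> r"
      using chain[OF q r] q r by blast
    have "(INF s\<in>C. s (u + v)) \<le> s (u + v)" by (rule INF_le[OF s(1)])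
    also have "\<dots> \<le> s u + s v" by (rule sublinear_add[OF sublinear_mem[OF s(1)]])
    also have "\<dots> \<le> q u + r v" using s(2,3) by (simp add: add_mono le_funD)
    finally show ?thesis by simp
  qed
  then have "(INF s\<in>C. s (u + v)) - q u \<le> (INF r\<in>C. r v)" if "q \<in> C" for q
    using that by (intro le_INF)
  then have "(INF s\<in>C. s (u + v)) - (INF r\<in>C. r v) \<le> (INF q\<in>C. q u)"
    by (intro le_INF) (simp add: algebra_simps)
  then show "(INF s\<in>C. s (u + v)) \<le> (INF q\<in>C. q u) + (INF r\<in>C. r v)" by simp
next
  fix c :: real and v assume c: "0 < c"
  have "(INF q\<in>C. q (c *\<^sub>R v)) / c \<le> (INF q\<in>C. q v)"
  proof (rule le_INF)
    fix q assume q: "q \<in> C"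
    have "(INF q\<in>C. q (c *\<^sub>R v)) \<le> c * q v"
      using INF_le[OF q, of "c *\<^sub>R v"] sublinear_scaleR_pos[OF sublinear_mem[OF q] c] by simp
    then show "(INF q\<in>C. q (c *\<^sub>R v)) / c \<le> q v"
      using c by (simp add: divide_le_eq mult.commute)
  qed
  then show "(INF q\<in>C. q (c *\<^sub>R v)) \<le> c * (INF q\<in>C. q v)"
    using c by (simp add: divide_le_eq mult.commute)
qed

end

lemma exists_minimal_dominated_sublinear:
  fixes p :: "'v::real_vector \<Rightarrow> real" and x :: 'v
  assumes p: "sublinear p"
  defines "S \<equiv> {q. sublinear q \<and> q \<le> p \<and> q (- x) \<le> - p x}"
  shows "\<exists>m\<in>S. \<forall>q\<in>S. q \<le> m \<longrightarrow> q = m"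
proof (rule predicate_Zorn)
  show "partial_order_on S (relation_of (\<lambda>q r. r \<le> q) S)"
    by (rule partial_order_on_relation_ofI) auto
next
  fix C assume C: "C \<in> Chains (relation_of (\<lambda>q r. r \<le> q) S)"
  show "\<exists>m\<in>S. \<forall>q\<in>C. m \<le> q"
  proof (cases "C = {}")
    case True
    have "ray_inf p x \<in> S"
      using sublinear_ray_inf[OF p] ray_inf_le[OF p] ray_inf_minus[OF p] by (simp add: S_def)
    then show ?thesis using True by blast
  next
    case False
    have CS: "C \<subseteq> S" using C by (rule Chains_relation_of)
    interpret dominated_sublinear_chain p C
    proof
      show "C \<noteq> {}" by fact
      show "\<And>q. q \<in> C \<Longrightarrow> sublinear q" "\<And>q. q \<in> C \<Longrightarrow> q \<le> p"
        using CS by (auto simp: S_def)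
      show "\<And>q r. q \<in> C \<Longrightarrow> r \<in> C \<Longrightarrow> q \<le> r \<or> r \<le> q"
        using C by (auto simp: Chains_def relation_of_def)
    qed
    obtain q0 where q0: "q0 \<in> C" using False by blast
    have "(\<lambda>v. INF q\<in>C. q v) \<in> S"
      using sublinear_INF INF_le[OF q0] q0 CS dominated[OF q0]
      by (auto simp: S_def le_fun_def intro: order_trans)
    moreover have "\<forall>q\<in>C. (\<lambda>v. INF q\<in>C. q v) \<le> q"
      using INF_le by (simp add: le_fun_def)
    ultimately show ?thesis by blast
  qed
qed

theorem sublinear_dominates_linear:
  fixes p :: "'v::real_vector \<Rightarrow> real"
  assumes p: "sublinear p"
  shows "\<exists>f. linear f \<and> f \<le> p \<and> f x = p x"
proof -
  obtain m where m: "sublinear m" "m \<le> p" "m (- x) \<le> - p x"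
    and minimal: "\<And>q. sublinear q \<Longrightarrow> q \<le> p \<Longrightarrow> q (- x) \<le> - p x \<Longrightarrow> q \<le> m \<Longrightarrow> q = m"
    using exists_minimal_dominated_sublinear[OF p, of x] by blast
  have "ray_inf m a = m" for a
  proof (rule minimal)
    show "sublinear (ray_inf m a)" by (rule sublinear_ray_inf[OF m(1)])
    show below: "ray_inf m a \<le> m" by (rule ray_inf_le[OF m(1)])
    then show "ray_inf m a \<le> p" using m(2) by (rule order_trans)
    show "ray_inf m a (- x) \<le> - p x" using below m(3) by (meson le_funD order_trans)
  qed
  then have "m (- a) = - m a" for a
    using ray_inf_minus[OF m(1), of a] sublinear_minus_le[OF m(1), of a] by simp
  then have "linear m" by (rule linear_if_sublinear_odd[OF m(1)])
  moreover have "m x = p x"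
    using m(2,3) sublinear_minus_le[OF m(1), of x] by (simp add: le_fun_def order_antisym)
  ultimately show ?thesis using m(2) by blast
qed

corollary norm_attaining_functional:
  fixes x :: "'v::real_normed_vector"
  obtains f where "linear f" "\<And>v. \<bar>f v\<bar> \<le> norm v" "f x = norm x"
proof -
  obtain f where f: "linear f" "f \<le> norm" "f x = norm x"
    using sublinear_dominates_linear[OF sublinear_norm] by blast
  have "\<bar>f v\<bar> \<le> norm v" for v
    using le_funD[OF f(2), of v] le_funD[OF f(2), of "- v"] linear_neg[OF f(1), of v] by simp
  with f show thesis by (intro that)
qed


section \<open>Support functionals\<close>

lemma dual_norm_le:
  assumes "N v0 \<le> 1" and "\<And>v. N v \<le> 1 \<Longrightarrow> \<bar>f v\<bar> \<le> B"
  shows "dual_norm N f \<le> B"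
  unfolding dual_norm_def by (rule cSup_least) (use assms in auto)

lemma abs_le_dual_norm:
  assumes "\<And>v. N v \<le> 1 \<Longrightarrow> \<bar>f v\<bar> \<le> B" and "N v \<le> 1"
  shows "\<bar>f v\<bar> \<le> dual_norm N f"
  unfolding dual_norm_def by (rule cSup_upper) (use assms in \<open>auto simp: bdd_above_def\<close>)

lemma dual_norm_comp_le:
  assumes "N v0 \<le> 1" and "\<And>v. M (P v) \<le> N v" and "\<And>v. M v \<le> 1 \<Longrightarrow> \<bar>h v\<bar> \<le> B"
  shows "dual_norm N (\<lambda>v. h (P v)) \<le> dual_norm M h"
  using assms(1)
proof (rule dual_norm_le)
  fix v assume "N v \<le> 1"
  then show "\<bar>h (P v)\<bar> \<le> dual_norm M h"
    using assms(2)[of v] by (intro abs_le_dual_norm[of M h B] assms(3)) auto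
qed

locale abs_homogeneous =
  fixes N :: "'v::real_vector \<Rightarrow> real"
  assumes nonneg: "\<And>v. 0 \<le> N v"
    and scaleR: "\<And>c v. N (c *\<^sub>R v) = \<bar>c\<bar> * N v"
begin

lemma abs_le_dual_norm_mult:
  assumes "is_dual_functional N f"
  shows "\<bar>f v\<bar> \<le> dual_norm N f * N v"
proof -
  obtain K where lin: "linear f" and K: "\<And>v. \<bar>f v\<bar> \<le> K * N v"
    using assms unfolding is_dual_functional_def by blast
  have bounded: "\<bar>f u\<bar> \<le> max K 0" if "N u \<le> 1" for u
  proof -
    have "K * N u \<le> max K 0 * N u" by (rule mult_right_mono) (simp_all add: nonneg)
    also have "\<dots> \<le> max K 0" using that nonneg[of u] by (simp add: mult_left_le)
    finally show ?thesis using K[of u] by simp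
  qed
  show ?thesis
  proof (cases "N v = 0")
    case True
    then show ?thesis using K[of v] by simp
  next
    case False
    then have pos: "0 < N v" using nonneg[of v] by simp
    have "N (inverse (N v) *\<^sub>R v) = 1" using pos scaleR[of "inverse (N v)" v] by simp
    then have "\<bar>f (inverse (N v) *\<^sub>R v)\<bar> \<le> dual_norm N f"
      by (intro abs_le_dual_norm[of N f "max K 0"]) (simp_all add: bounded)
    then show ?thesis using pos by (simp add: linear_cmul[OF lin] abs_mult field_simps)
  qed
qed

lemma supp_functional_bound: "f \<in> supp_functionals N w \<Longrightarrow> \<bar>f v\<bar> \<le> N v"
  using abs_le_dual_norm_mult[of f v] unfolding supp_functionals_def by simp

lemma supp_functionalsI:
  assumes lin: "linear f" and bound: "\<And>v. \<bar>f v\<bar> \<le> N v" and "0 < N w" and "f w = N w"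
  shows "f \<in> supp_functionals N w"
proof -
  have bounded: "\<bar>f v\<bar> \<le> 1" if "N v \<le> 1" for v using bound[of v] that by simp
  have "N 0 \<le> 1" using scaleR[of 0 0] by simp
  then have upper: "dual_norm N f \<le> 1" using bounded by (rule dual_norm_le)
  have "N (inverse (N w) *\<^sub>R w) = 1" using \<open>0 < N w\<close> scaleR[of "inverse (N w)" w] by simp
  then have "\<bar>f (inverse (N w) *\<^sub>R w)\<bar> \<le> dual_norm N f"
    by (intro abs_le_dual_norm[of N f 1]) (simp_all add: bounded)
  then have lower: "1 \<le> dual_norm N f"
    using \<open>0 < N w\<close> \<open>f w = N w\<close> by (simp add: linear_cmul[OF lin])
  have "is_dual_functional N f"
    unfolding is_dual_functional_def using lin bound by (intro conjI exI[of _ 1]) simp_all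
  with upper lower show ?thesis using \<open>f w = N w\<close> by (simp add: supp_functionals_def)
qed

lemma supp_functional_vanishes:
  assumes f: "f \<in> supp_functionals N w" and "N (w + u) \<le> N w" and "N (w - u) \<le> N w"
  shows "f u = 0"
proof -
  have lin: "linear f" and "f w = N w"
    using f unfolding supp_functionals_def is_dual_functional_def by auto
  have "f w + f u \<le> N w" "f w - f u \<le> N w"
    using supp_functional_bound[OF f, of "w + u"] supp_functional_bound[OF f, of "w - u"] assms(2,3)
    by (simp_all add: linear_add[OF lin] linear_diff[OF lin])
  then show ?thesis using \<open>f w = N w\<close> by simp
qed

end

section \<open>Support functionals of the max-norm sum\<close>

interpretation norm: abs_homogeneous "norm :: 'v::real_normed_vector \<Rightarrow> real"
  by unfold_locales simp_all

interpretation inf_sum: abs_homogeneous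
  "inf_sum_norm :: 'a::real_normed_vector \<times> 'b::real_normed_vector \<Rightarrow> real"
  by unfold_locales (auto simp: inf_sum_norm_def max_mult_distrib_left le_max_iff_disj)

lemma inf_sum_norm_pos: "z \<noteq> 0 \<Longrightarrow> 0 < inf_sum_norm z"
  by (cases z) (auto simp: inf_sum_norm_def less_max_iff_disj zero_prod_def)

lemma inf_sum_norm_swap: "inf_sum_norm (prod.swap z) = inf_sum_norm z"
  by (simp add: inf_sum_norm_def max.commute)

lemma inf_sum_supp_functional_fst:
  fixes x :: "'a::real_normed_vector" and y :: "'b::real_normed_vector"
  assumes lt: "norm y < norm x" and f: "f \<in> supp_functionals inf_sum_norm (x, y)"
  shows "f = (\<lambda>p. f (fst p, 0))" and "(\<lambda>u. f (u, 0)) \<in> supp_functionals norm x"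
proof -
  have lin: "linear f" and fxy: "f (x, y) = norm x"
    using f lt unfolding supp_functionals_def is_dual_functional_def inf_sum_norm_def by auto
  have vanish: "f (0, w) = 0" for w
  proof -
    have "0 < norm w + 1" using norm_ge_zero[of w] by linarith
    define s where "s = (norm x - norm y) / (norm w + 1)"
    have "0 < s" unfolding s_def using lt \<open>0 < norm w + 1\<close> by simp
    have "s * norm w \<le> s * (norm w + 1)" using \<open>0 < s\<close> by simp
    also have "\<dots> = norm x - norm y" using \<open>0 < norm w + 1\<close> by (simp add: s_def)
    finally have "norm (y + s *\<^sub>R w) \<le> norm x" "norm (y - s *\<^sub>R w) \<le> norm x"
      using norm_triangle_ineq[of y "s *\<^sub>R w"] norm_triangle_ineq4[of y "s *\<^sub>R w"] \<open>0 < s\<close>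
      by simp_all
    then have "f (0, s *\<^sub>R w) = 0"
      using lt by (intro inf_sum.supp_functional_vanishes[OF f]) (simp_all add: inf_sum_norm_def)
    then show ?thesis
      using linear_cmul[OF lin, of s "(0, w)"] \<open>0 < s\<close> by simp
  qed
  show split: "f = (\<lambda>p. f (fst p, 0))"
  proof
    fix p :: "'a \<times> 'b"
    have "f p = f ((fst p, 0) + (0, snd p))" by simp
    then show "f p = f (fst p, 0)" by (simp only: linear_add[OF lin] vanish add_0_right)
  qed
  show "(\<lambda>u. f (u, 0)) \<in> supp_functionals norm x"
  proof (rule norm.supp_functionalsI)
    have "linear (\<lambda>u::'a. (u, 0::'b))" by (rule linearI) simp_all
    then show "linear (\<lambda>u. f (u, 0))" using linear_compose[OF _ lin] by (simp add: o_def)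
    show "\<bar>f (u, 0)\<bar> \<le> norm u" for u
      using inf_sum.supp_functional_bound[OF f, of "(u, 0)"] by (simp add: inf_sum_norm_def)
    show "0 < norm x" using lt norm_ge_zero[of y] by linarith
    show "f (x, 0) = norm x" using fun_cong[OF split, of "(x, y)"] fxy by simp
  qed
qed

lemma delta_smooth_inf_sum_fst:
  fixes x :: "'a::real_normed_vector" and y :: "'b::real_normed_vector"
  assumes lt: "norm y < norm x" and smooth: "delta_smooth norm \<delta> x"
  shows "delta_smooth inf_sum_norm \<delta> (x, y)"
  unfolding delta_smooth_def
proof (intro conjI ballI)
  show "(x, y) \<noteq> 0" using smooth by (simp add: delta_smooth_def zero_prod_def)
next
  fix f g assume f: "f \<in> supp_functionals inf_sum_norm (x, y)"
    and g: "g \<in> supp_functionals inf_sum_norm (x, y)"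
  define f1 where "f1 = (\<lambda>u. f (u, 0))"
  define g1 where "g1 = (\<lambda>u. g (u, 0))"
  have f1: "f1 \<in> supp_functionals norm x" and g1: "g1 \<in> supp_functionals norm x"
    unfolding f1_def g1_def using inf_sum_supp_functional_fst(2) lt f g by blast+
  have "f = (\<lambda>p. f1 (fst p))" and "g = (\<lambda>p. g1 (fst p))"
    unfolding f1_def g1_def
    by (rule inf_sum_supp_functional_fst(1)[OF lt f], rule inf_sum_supp_functional_fst(1)[OF lt g])
  then have "dual_norm inf_sum_norm (\<lambda>p. f p - g p) = dual_norm inf_sum_norm (\<lambda>p::'a \<times> 'b. f1 (fst p) - g1 (fst p))"
    by (simp only:)
  also have "\<dots> \<le> dual_norm norm (\<lambda>u. f1 u - g1 u)"
  proof (rule dual_norm_comp_le)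
    show "inf_sum_norm (0::'a \<times> 'b) \<le> 1" by (simp add: inf_sum_norm_def)
    show "norm (fst p) \<le> inf_sum_norm p" for p :: "'a \<times> 'b" by (simp add: inf_sum_norm_def)
    show "\<bar>f1 u - g1 u\<bar> \<le> 2" if "norm u \<le> 1" for u
      using norm.supp_functional_bound[OF f1, of u] norm.supp_functional_bound[OF g1, of u] that
      by linarith
  qed
  also have "\<dots> \<le> \<delta>" using smooth f1 g1 unfolding delta_smooth_def by blast
  finally show "dual_norm inf_sum_norm (\<lambda>p. f p - g p) \<le> \<delta>" .
qed

lemma supp_functional_inf_sum_swap:
  fixes x :: "'a::real_normed_vector" and y :: "'b::real_normed_vector"
  assumes f: "f \<in> supp_functionals inf_sum_norm (y, x)" and "(x, y) \<noteq> 0"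
  shows "(\<lambda>p. f (prod.swap p)) \<in> supp_functionals inf_sum_norm (x, y)"
proof (rule inf_sum.supp_functionalsI)
  have swap: "linear (prod.swap :: 'a \<times> 'b \<Rightarrow> 'b \<times> 'a)" by (rule linearI) auto
  have lin: "linear f" using f by (simp add: supp_functionals_def is_dual_functional_def)
  show "linear (\<lambda>p. f (prod.swap p))" using linear_compose[OF swap lin] by (simp add: o_def)
  show "\<bar>f (prod.swap p)\<bar> \<le> inf_sum_norm p" for p :: "'a \<times> 'b"
    using inf_sum.supp_functional_bound[OF f, of "prod.swap p"] by (simp add: inf_sum_norm_swap)
  show "0 < inf_sum_norm (x, y)" using \<open>(x, y) \<noteq> 0\<close> by (rule inf_sum_norm_pos)
  show "f (prod.swap (x, y)) = inf_sum_norm (x, y)"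
    using f inf_sum_norm_swap[of "(x, y)"] by (simp add: supp_functionals_def)
qed

lemma delta_smooth_inf_sum_swap:
  fixes x :: "'a::real_normed_vector" and y :: "'b::real_normed_vector"
  assumes smooth: "delta_smooth inf_sum_norm \<delta> (y, x)"
  shows "delta_smooth inf_sum_norm \<delta> (x, y)"
proof -
  have "(y, x) \<noteq> 0" and "(x, y) \<noteq> 0"
    using smooth by (auto simp: delta_smooth_def zero_prod_def)
  moreover have "dual_norm inf_sum_norm (\<lambda>p. f p - g p) \<le> \<delta>"
    if f: "f \<in> supp_functionals inf_sum_norm (x, y)"
    and g: "g \<in> supp_functionals inf_sum_norm (x, y)" for f g
  proof -
    let ?h = "\<lambda>q. f (prod.swap q) - g (prod.swap q)"
    have "dual_norm inf_sum_norm (\<lambda>p. f p - g p) = dual_norm inf_sum_norm (\<lambda>p. ?h (prod.swap p))"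
      by simp
    also have "\<dots> \<le> dual_norm inf_sum_norm ?h"
    proof (rule dual_norm_comp_le)
      show "inf_sum_norm (0::'a \<times> 'b) \<le> 1" by (simp add: inf_sum_norm_def)
      show "inf_sum_norm (prod.swap p) \<le> inf_sum_norm p" for p :: "'a \<times> 'b"
        by (simp add: inf_sum_norm_swap)
      show "\<bar>?h q\<bar> \<le> 2" if "inf_sum_norm q \<le> 1" for q
        using inf_sum.supp_functional_bound[OF f, of "prod.swap q"]
          inf_sum.supp_functional_bound[OF g, of "prod.swap q"] that
        by (simp add: inf_sum_norm_swap)
    qed
    also have "\<dots> \<le> \<delta>"
      using smooth supp_functional_inf_sum_swap[OF _ \<open>(y, x) \<noteq> 0\<close>] f g
      unfolding delta_smooth_def by simp
    finally show ?thesis .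
  qed
  ultimately show ?thesis unfolding delta_smooth_def by blast
qed

lemma delta_smooth_inf_sum_snd:
  fixes x :: "'a::real_normed_vector" and y :: "'b::real_normed_vector"
  assumes "norm x < norm y" and "delta_smooth norm \<delta> y"
  shows "delta_smooth inf_sum_norm \<delta> (x, y)"
  using delta_smooth_inf_sum_fst[OF assms] by (rule delta_smooth_inf_sum_swap)

lemma not_delta_smooth_inf_sum_norm_eq:
  fixes x :: "'a::real_normed_vector" and y :: "'b::real_normed_vector"
  assumes nz: "(x, y) \<noteq> 0" and eq: "norm x = norm y" and "\<delta> < 2"
  shows "\<not> delta_smooth inf_sum_norm \<delta> (x, y)"
proof
  assume smooth: "delta_smooth inf_sum_norm \<delta> (x, y)"
  have "0 < norm x" "0 < norm y" using nz eq by (auto simp: zero_prod_def)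
  have fst: "linear (fst :: 'a \<times> 'b \<Rightarrow> 'a)" and snd: "linear (snd :: 'a \<times> 'b \<Rightarrow> 'b)"
    by (simp_all add: bounded_linear.linear bounded_linear_fst bounded_linear_snd)
  obtain \<phi> where \<phi>: "linear \<phi>" "\<And>v. \<bar>\<phi> v\<bar> \<le> norm v" "\<phi> x = norm x"
    using norm_attaining_functional[of x] by blast
  obtain \<psi> where \<psi>: "linear \<psi>" "\<And>v. \<bar>\<psi> v\<bar> \<le> norm v" "\<psi> y = norm y"
    using norm_attaining_functional[of y] by blast
  have \<phi>J: "(\<lambda>p. \<phi> (fst p)) \<in> supp_functionals inf_sum_norm (x, y)"
  proof (rule inf_sum.supp_functionalsI)
    show "linear (\<lambda>p::'a \<times> 'b. \<phi> (fst p))"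
      using linear_compose[OF fst \<phi>(1)] by (simp add: o_def)
    show "\<bar>\<phi> (fst p)\<bar> \<le> inf_sum_norm p" for p :: "'a \<times> 'b"
      using \<phi>(2)[of "fst p"] by (simp add: inf_sum_norm_def le_max_iff_disj)
    show "0 < inf_sum_norm (x, y)" using nz by (rule inf_sum_norm_pos)
    show "\<phi> (fst (x, y)) = inf_sum_norm (x, y)" using \<phi>(3) eq by (simp add: inf_sum_norm_def)
  qed
  have \<psi>J: "(\<lambda>p. \<psi> (snd p)) \<in> supp_functionals inf_sum_norm (x, y)"
  proof (rule inf_sum.supp_functionalsI)
    show "linear (\<lambda>p::'a \<times> 'b. \<psi> (snd p))"
      using linear_compose[OF snd \<psi>(1)] by (simp add: o_def)
    show "\<bar>\<psi> (snd p)\<bar> \<le> inf_sum_norm p" for p :: "'a \<times> 'b"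
      using \<psi>(2)[of "snd p"] by (simp add: inf_sum_norm_def le_max_iff_disj)
    show "0 < inf_sum_norm (x, y)" using nz by (rule inf_sum_norm_pos)
    show "\<psi> (snd (x, y)) = inf_sum_norm (x, y)" using \<psi>(3) eq by (simp add: inf_sum_norm_def)
  qed
  have le: "dual_norm inf_sum_norm (\<lambda>p. \<phi> (fst p) - \<psi> (snd p)) \<le> \<delta>"
    using smooth \<phi>J \<psi>J unfolding delta_smooth_def
    by (elim conjE) (drule bspec[OF _ \<phi>J], drule bspec[OF _ \<psi>J], simp)
  define z where "z = (inverse (norm x) *\<^sub>R x, - (inverse (norm y) *\<^sub>R y))"
  have "\<phi> (fst z) - \<psi> (snd z) = 2"
    using \<phi>(3) \<psi>(3) \<open>0 < norm x\<close> \<open>0 < norm y\<close>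
    by (simp add: z_def linear_cmul[OF \<phi>(1)] linear_cmul[OF \<psi>(1)] linear_neg[OF \<psi>(1)])
  moreover have "\<bar>\<phi> (fst z) - \<psi> (snd z)\<bar> \<le> dual_norm inf_sum_norm (\<lambda>p. \<phi> (fst p) - \<psi> (snd p))"
  proof (rule abs_le_dual_norm)
    show "\<bar>\<phi> (fst p) - \<psi> (snd p)\<bar> \<le> 2" if "inf_sum_norm p \<le> 1" for p
      using \<phi>(2)[of "fst p"] \<psi>(2)[of "snd p"] that by (simp add: inf_sum_norm_def) linarith
    show "inf_sum_norm z \<le> 1"
      using \<open>0 < norm x\<close> \<open>0 < norm y\<close> by (simp add: z_def inf_sum_norm_def)
  qed
  ultimately show False using le \<open>\<delta> < 2\<close> by linarith
qed

theorem theorem6p5: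
  fixes x :: "'a::real_normed_vector" and y :: "'b::real_normed_vector"
    and \<epsilon>x \<epsilon>y :: real
  assumes "(x, y) \<noteq> 0"
  shows "(norm x > norm y \<and> 0 \<le> \<epsilon>x \<and> \<epsilon>x < 2 \<and> delta_smooth norm \<epsilon>x x
            \<longrightarrow> delta_smooth inf_sum_norm \<epsilon>x (x, y))
       \<and> (norm x < norm y \<and> 0 \<le> \<epsilon>y \<and> \<epsilon>y < 2 \<and> delta_smooth norm \<epsilon>y y
            \<longrightarrow> delta_smooth inf_sum_norm \<epsilon>y (x, y))
       \<and> (norm x = norm y \<longrightarrow>
            (\<forall>\<epsilon>. 0 \<le> \<epsilon> \<and> \<epsilon> < 2 \<longrightarrow> \<not> delta_smooth inf_sum_norm \<epsilon> (x, y)))"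
proof (intro conjI impI allI; elim conjE)
  show "delta_smooth inf_sum_norm \<epsilon>x (x, y)" if "norm y < norm x" "delta_smooth norm \<epsilon>x x"
    using that by (rule delta_smooth_inf_sum_fst)
  show "delta_smooth inf_sum_norm \<epsilon>y (x, y)" if "norm x < norm y" "delta_smooth norm \<epsilon>y y"
    using that by (rule delta_smooth_inf_sum_snd)
  show "\<not> delta_smooth inf_sum_norm \<epsilon> (x, y)" if "norm x = norm y" "\<epsilon> < 2" for \<epsilon>
    using assms that by (rule not_delta_smooth_inf_sum_norm_eq)
qed

end
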